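(* Let $h:B^d\to{\mathbb R}$ be a $C^2$ function such that $L^{-1}\operatorname{Hess}h$ is $\Gamma$-invariant, i.e. for all $A\in\Gamma$, $x\in B^d$, $X,Y\in{\mathbb R}^d$, $$L(x)^{-1}\operatorname{Hess}h(x)(X,Y)=L(A\cdot x)^{-1}\operatorname{Hess}h(A\cdot x)\big(DA(x)X,DA(x)Y\big),$$ where $DA(x)$ is the differential of $y\mapsto A\cdot y$ at $x$. Then there exists a unique cocycle $\tau\in Z^1(\Gamma,{\mathbb R}^{d,1})$ such that $h$ is $\tau$-equivariant.
   Context: Notation. $B^d$ denotes the open Euclidean unit ball of ${\mathbb R}^d$; $\langle\cdot,\cdot\rangle_d$ and $\|\cdot\|$ are the Euclidean inner product and norm, $L(x)=\sqrt{1-\|x\|^2}$, and $\operatorname{Hess}$ is the Euclidean Hessian. Minkowski space ${\mathbb R}^{d,1}$ is ${\mathbb R}^{d+1}$ with $\langle x,y\rangle_{d,1}=x_1y_1+\dots+x_dy_d-x_{d+1}y_{d+1}$; for $v\in{\mathbb R}^{d,1}$ write $v=(\bar v,v_{d+1})$. $O_+(d,1)$ is the group of linear maps preserving $\langle\cdot,\cdot\rangle_{d,1}$ and the sheet $\{\langle x,x\rangle_{d,1}=-1,\ x_{d+1}>0\}$. For $A\in O_+(d,1)$, $x\in B^d$, $A\cdot x\in B^d$ is the unique point with $A\binom{x}{1}\in{\mathbb R}_{>0}\binom{A\cdot x}{1}$; this is an isometry of the Klein metric $g_{{\mathbb H}^d}(x)(X,Y)=L(x)^{-2}\langle X,Y\rangle_d+L(x)^{-4}\langle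 x,X\rangle_d\langle x,Y\rangle_d$. Action on functions. $((A,v)h)(x)=\frac{L(x)}{L(A^{-1}\cdot x)}h(A^{-1}\cdot x)+\langle x,\bar v\rangle_d-v_{d+1}$. Group setup. $d\ge2$ and $\Gamma\subset O_+(d,1)$ is a subgroup such that the action $x\mapsto A\cdot x$ of $\Gamma$ on $B^d$ is free, properly discontinuous and cocompact, so that $M_\Gamma=(B^d,g_{{\mathbb H}^d})/\Gamma$ is a compact oriented hyperbolic manifold. A cocycle is a map $\tau:\Gamma\to{\mathbb R}^{d,1}$ with $\tau(AB)=\tau(A)+A\tau(B)$; they form the vector space $Z^1(\Gamma,{\mathbb R}^{d,1})$. For a cocycle $\tau$, a continuous $h:B^d\to{\mathbb R}$ is $\tau$-equivariant if $(A,\tau(A))h=h$ for all $A\in\Gamma$. *)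

theory Defs
  imports "HOL-Analysis.Analysis"
begin

text \<open>Euclidean space R^d is real^'n; Minkowski space R^{d,1} is real^('n option),
  where coordinate Some i is x_i and coordinate None is x_{d+1}.\<close>

type_synonym ('n) mvec = "real^('n option)"
type_synonym ('n) mmat = "real^('n option)^('n option)"

definition mink :: "'n::finite mvec \<Rightarrow> 'n mvec \<Rightarrow> real" where
  "mink v w = (\<Sum>i\<in>UNIV. v $ Some i * w $ Some i) - v $ None * w $ None"

definition vbar :: "'n::finite mvec \<Rightarrow> real^'n" where
  "vbar v = (\<chi> i. v $ Some i)"

definition lift :: "real^'n::finite \<Rightarrow> 'n mvec" where
  "lift x = (\<chi> j. case j of Some i \<Rightarrow> x $ i | None \<Rightarrow> 1)"

definition Oplus :: "('n::finite) mmat set" where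
  "Oplus = {A. (\<forall>v w. mink (A *v v) (A *v w) = mink v w) \<and>
               (\<forall>x. mink x x = -1 \<and> x $ None > 0 \<longrightarrow> (A *v x) $ None > 0)}"

text \<open>A \<cdot> x: the point of B^d with A (x,1) a positive multiple of (A\<cdot>x, 1).\<close>
definition act :: "('n::finite) mmat \<Rightarrow> real^'n \<Rightarrow> real^'n" where
  "act A x = (1 / (A *v lift x) $ None) *\<^sub>R vbar (A *v lift x)"

definition Lf :: "real^'n::finite \<Rightarrow> real" where
  "Lf x = sqrt (1 - (norm x)\<^sup>2)"

definition fun_act :: "('n::finite) mmat \<Rightarrow> 'n mvec \<Rightarrow> (real^'n \<Rightarrow> real) \<Rightarrow> real^'n \<Rightarrow> real" where
  "fun_act A v h x = Lf x / Lf (act (matrix_inv A) x) * h (act (matrix_inv A) x)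
                     + inner x (vbar v) - v $ None"

definition cocycle :: "('n::finite) mmat set \<Rightarrow> ('n mmat \<Rightarrow> 'n mvec) \<Rightarrow> bool" where
  "cocycle \<Gamma> \<tau> \<longleftrightarrow> (\<forall>A\<in>\<Gamma>. \<forall>B\<in>\<Gamma>. \<tau> (A ** B) = \<tau> A + A *v \<tau> B)"

definition equivariant :: "('n::finite) mmat set \<Rightarrow> ('n mmat \<Rightarrow> 'n mvec) \<Rightarrow> (real^'n \<Rightarrow> real) \<Rightarrow> bool" where
  "equivariant \<Gamma> \<tau> h \<longleftrightarrow> continuous_on (ball 0 1) h \<and>
     (\<forall>A\<in>\<Gamma>. \<forall>x\<in>ball 0 1. fun_act A (\<tau> A) h x = h x)"

definition C2_with_hessian :: "(real^'n::finite \<Rightarrow> real) \<Rightarrow> (real^'n) set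
     \<Rightarrow> (real^'n \<Rightarrow> real^'n \<Rightarrow> real^'n \<Rightarrow> real) \<Rightarrow> bool" where
  "C2_with_hessian h S Hs \<longleftrightarrow> (\<exists>G. (\<forall>x\<in>S. (h has_derivative (\<lambda>X. inner (G x) X)) (at x)) \<and>
      (\<forall>x\<in>S. \<exists>DG. (G has_derivative DG) (at x) \<and> (\<forall>X Y. Hs x X Y = inner (DG X) Y)) \<and>
      (\<forall>X Y. continuous_on S (\<lambda>x. Hs x X Y)))"

definition admissible_group :: "('n::finite) mmat set \<Rightarrow> bool" where
  "admissible_group \<Gamma> \<longleftrightarrow>
     \<Gamma> \<subseteq> Oplus \<and> mat 1 \<in> \<Gamma> \<and>
     (\<forall>A\<in>\<Gamma>. \<forall>B\<in>\<Gamma>. A ** B \<in> \<Gamma>) \<and> (\<forall>A\<in>\<Gamma>. matrix_inv A \<in> \<Gamma>) \<and>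
     (\<forall>A\<in>\<Gamma>. det A > 0) \<and>
     (\<forall>A\<in>\<Gamma>. \<forall>x\<in>ball 0 1. act A x = x \<longrightarrow> A = mat 1) \<and>
     (\<forall>K. compact K \<and> K \<subseteq> ball 0 1 \<longrightarrow> finite {A\<in>\<Gamma>. act A ` K \<inter> K \<noteq> {}}) \<and>
     (\<exists>K. compact K \<and> K \<subseteq> ball 0 1 \<and> (\<Union>A\<in>\<Gamma>. act A ` K) = ball 0 1)"

end

theory Submission
  imports Defs
begin

text \<open>
  For \<open>A \<in> \<Gamma>\<close> put \<open>B = A\<^sup>-\<^sup>1\<close> and let \<open>\<lambda>(x)\<close> be the last coordinate of \<open>B (x,1)\<close>, so that
  \<open>B (x,1) = \<lambda>(x) (B\<cdot>x, 1)\<close> and \<open>L(x) = \<lambda>(x) L(B\<cdot>x)\<close>. Then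
  \<open>((A,v)h)(x) = \<lambda>(x) h(B\<cdot>x) + \<langle>(x,1), v\<rangle>\<^sub>d\<^sub>,\<^sub>1\<close>. Differentiating \<open>g = \<lambda> \<cdot> h\<circ>B - h\<close> twice,
  the invariance of \<open>L\<^sup>-\<^sup>1 Hess h\<close> makes the second derivative of \<open>g\<close> vanish, so \<open>g\<close> is affine,
  i.e. \<open>g(x) = -\<langle>(x,1), v\<rangle>\<^sub>d\<^sub>,\<^sub>1\<close> for a unique \<open>v\<close>; this \<open>v\<close> is \<open>\<tau>(A)\<close>.
  The action law \<open>(AB, v + A w) = (A,v) \<circ> (B,w)\<close> together with uniqueness gives the cocycle
  identity. Nothing here depends on the dimension.
\<close>

lemma matrix_inv_right: "invertible (A::real^'m^'m) \<Longrightarrow> A ** matrix_inv A = mat 1"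
  and matrix_inv_left: "invertible (A::real^'m^'m) \<Longrightarrow> matrix_inv A ** A = mat 1"
  using someI_ex[of "\<lambda>A'. A ** A' = mat 1 \<and> A' ** A = mat 1"]
  unfolding invertible_def matrix_inv_def by auto

lemma matrix_inv_mult:
  fixes A B :: "real^'m^'m"
  assumes "invertible A" "invertible B"
  shows "matrix_inv (A ** B) = matrix_inv B ** matrix_inv A"
proof -
  have right: "(A ** B) ** (matrix_inv B ** matrix_inv A) = mat 1"
    by (simp add: matrix_mul_assoc[symmetric])
      (simp add: matrix_mul_assoc matrix_inv_right assms)
  have left: "(matrix_inv B ** matrix_inv A) ** (A ** B) = mat 1"
    by (simp add: matrix_mul_assoc[symmetric])
      (simp add: matrix_mul_assoc matrix_inv_left assms)
  then have "invertible (A ** B)"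
    using right unfolding invertible_def by blast
  then have "matrix_inv (A ** B) = matrix_inv (A ** B) ** ((A ** B) ** (matrix_inv B ** matrix_inv A))"
    by (simp add: right)
  also have "\<dots> = (matrix_inv (A ** B) ** (A ** B)) ** (matrix_inv B ** matrix_inv A)"
    by (simp add: matrix_mul_assoc)
  also have "\<dots> = matrix_inv B ** matrix_inv A"
    by (simp add: matrix_inv_left \<open>invertible (A ** B)\<close>)
  finally show ?thesis .
qed

lemma second_derivative_zero_imp_affine:
  fixes g :: "'a::euclidean_space \<Rightarrow> real"
  assumes S: "convex S"
    and g: "\<And>x. x \<in> S \<Longrightarrow> (g has_derivative g' x) (at x within S)"
    and g': "\<And>x X. x \<in> S \<Longrightarrow> ((\<lambda>x. g' x X) has_derivative (\<lambda>_. 0)) (at x within S)"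
  shows "\<exists>a c. \<forall>x\<in>S. g x = inner a x + c"
proof (cases "S = {}")
  case False
  then obtain x0 where x0: "x0 \<in> S" by blast
  have g'_const: "g' x X = g' x0 X" if "x \<in> S" for x X
    using has_derivative_zero_constant[OF S g'[of _ X]] that x0 by metis
  have lin: "bounded_linear (g' x0)"
    using g[OF x0] by (rule has_derivative_bounded_linear)
  have "((\<lambda>x. g x - g' x0 x) has_derivative (\<lambda>_. 0)) (at x within S)" if "x \<in> S" for x
    using has_derivative_diff[OF g[OF that] bounded_linear_imp_has_derivative[OF lin]]
    by (simp add: g'_const[OF that])
  then obtain c where "\<forall>x\<in>S. g x - g' x0 x = c"
    using has_derivative_zero_constant[OF S] by blast
  moreover have "g' x0 x = inner (adjoint (g' x0) 1) x" for x
    using adjoint_clauses(2)[OF bounded_linear.linear[OF lin], of 1 x] by simp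
  ultimately show ?thesis
    by (metis diff_eq_eq add.commute)
qed simp

definition lift_vec :: "real^'n::finite \<Rightarrow> 'n mvec" where
  "lift_vec X = (\<chi> j. case j of Some i \<Rightarrow> X $ i | None \<Rightarrow> 0)"

lemma lift_eq_lift_vec: "lift x = lift_vec x + axis None 1"
  by (simp add: vec_eq_iff lift_def lift_vec_def axis_def split: option.splits)

lemma bounded_linear_lift_vec: "bounded_linear (lift_vec :: real^'n::finite \<Rightarrow> _)"
  by (simp add: linear_conv_bounded_linear[symmetric], rule linearI)
    (simp_all add: vec_eq_iff lift_vec_def split: option.splits)

lemma bounded_linear_vbar: "bounded_linear (vbar :: 'n::finite mvec \<Rightarrow> _)"
  by (simp add: linear_conv_bounded_linear[symmetric], rule linearI)
    (simp_all add: vec_eq_iff vbar_def)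

lemma vbar_lift: "vbar (lift x) = x" and lift_nth_None: "lift x $ None = 1"
  by (simp_all add: vec_eq_iff vbar_def lift_def)

lemma mink_inner: "mink v w = inner (vbar v) (vbar w) - v $ None * w $ None"
  by (simp add: mink_def inner_vec_def vbar_def)

lemma mink_lift: "mink (lift x) v = inner x (vbar v) - v $ None"
  by (simp add: mink_inner vbar_lift lift_nth_None)

lemma mink_scaleR_left: "mink (c *\<^sub>R v) w = c * mink v w"
  and mink_scaleR_right: "mink v (c *\<^sub>R w) = c * mink v w"
  by (simp_all add: mink_def sum_distrib_left algebra_simps)

lemma mink_add_right: "mink u (v + w) = mink u v + mink u w"
  by (simp add: mink_def sum.distrib algebra_simps)

lemma affine_eq_mink_lift: "\<exists>v. \<forall>x. inner a x + c = mink (lift x) v"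
proof
  show "\<forall>x. inner a x + c = mink (lift x) (lift_vec a - c *\<^sub>R axis None 1)"
    by (simp add: mink_lift vbar_def lift_vec_def axis_def inner_commute)
qed

lemma mink_lift_eq_on_ball_imp_eq:
  fixes v w :: "'n::finite mvec"
  assumes eq: "\<forall>x\<in>ball (0::real^'n) 1. mink (lift x) v = mink (lift x) w"
  shows "v = w"
proof -
  have None: "v $ None = w $ None"
    using eq[rule_format, of 0] by (simp add: mink_lift)
  have "v $ Some i = w $ Some i" for i
  proof -
    have "(1/2::real) *\<^sub>R axis i 1 \<in> ball (0::real^'n) 1"
      by simp
    from eq[rule_format, OF this] None show ?thesis
      by (simp add: mink_lift inner_axis' vbar_def)
  qed
  with None show ?thesis
    unfolding vec_eq_iff by (metis option.exhaust)
qed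

text \<open>The factor \<open>\<lambda>\<close> with \<open>B (x,1) = \<lambda> (B\<cdot>x, 1)\<close>; by \<open>Oplus_act\<close> it equals \<open>L(x) / L(B\<cdot>x)\<close>.\<close>

abbreviation act_factor :: "('n::finite) mmat \<Rightarrow> real^'n \<Rightarrow> real" where
  "act_factor B x \<equiv> (B *v lift x) $ None"

lemma lift_act:
  "act_factor B x \<noteq> 0 \<Longrightarrow> lift (act B x) = (1 / act_factor B x) *\<^sub>R (B *v lift x)"
  by (simp add: vec_eq_iff lift_def act_def vbar_def split: option.splits)

lemma act_mult:
  assumes "act_factor C x \<noteq> 0"
  shows "act (D ** C) x = act D (act C x)"
  using assms
  by (simp add: act_def[of D] lift_act matrix_vector_mult_scaleR matrix_vector_mul_assoc
      vbar_def act_def[of "D ** C"] vec_eq_iff)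

lemma Lf_pos: "x \<in> ball 0 1 \<Longrightarrow> Lf x > 0"
  by (simp add: Lf_def abs_square_less_1)

lemma Oplus_act:
  assumes B: "B \<in> Oplus" and x: "x \<in> ball (0::real^'n::finite) 1"
  shows "act_factor B x > 0" and "act B x \<in> ball 0 1"
    and "Lf x = act_factor B x * Lf (act B x)"
proof -
  let ?t = "act_factor B x"
  have Lx: "(Lf x)\<^sup>2 = 1 - (norm x)\<^sup>2"
    using x by (simp add: Lf_def abs_square_less_1 less_imp_le)
  \<comment> \<open>\<open>(x,1)/L(x)\<close> lies on the upper sheet of the hyperboloid, which \<open>B\<close> preserves.\<close>
  define w where "w = (1 / Lf x) *\<^sub>R lift x"
  have "mink w w = -1" and "w $ None > 0"
    using Lf_pos[OF x] Lx
    unfolding w_def mink_scaleR_left mink_scaleR_right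
    by (simp_all add: mink_lift vbar_lift lift_nth_None dot_square_norm field_simps power2_eq_square)
  then have "(B *v w) $ None > 0"
    using B unfolding Oplus_def by blast
  then show t: "?t > 0"
    using Lf_pos[OF x] by (simp add: w_def matrix_vector_mult_scaleR zero_less_divide_iff)
  have "(norm x)\<^sup>2 - 1 = mink (lift x) (lift x)"
    by (simp add: mink_lift vbar_lift lift_nth_None dot_square_norm)
  also have "\<dots> = mink (B *v lift x) (B *v lift x)"
    using B unfolding Oplus_def by auto
  also have "\<dots> = ?t\<^sup>2 * ((norm (act B x))\<^sup>2 - 1)"
    using t by (simp add: mink_inner act_def dot_square_norm power2_eq_square algebra_simps)
  finally have eq: "?t\<^sup>2 * (1 - (norm (act B x))\<^sup>2) = 1 - (norm x)\<^sup>2"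
    by (simp add: algebra_simps)
  moreover have "1 - (norm x)\<^sup>2 > 0"
    using x by (simp add: abs_square_less_1)
  ultimately have "1 - (norm (act B x))\<^sup>2 > 0"
    using t by (metis zero_less_mult_pos zero_less_power)
  then show "act B x \<in> ball 0 1"
    by (simp add: abs_square_less_1)
  show "Lf x = ?t * Lf (act B x)"
    unfolding Lf_def eq[symmetric] real_sqrt_mult using t by simp
qed

lemma mink_lift_act:
  assumes C: "C \<in> Oplus" and CA: "C ** A = mat 1" and t: "act_factor C x \<noteq> 0"
  shows "act_factor C x * mink (lift (act C x)) w = mink (lift x) (A *v w)"
proof -
  have "act_factor C x * mink (lift (act C x)) w = mink (C *v lift x) (C *v (A *v w))"
    using t by (simp add: lift_act mink_scaleR_left matrix_vector_mul_assoc CA)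
  also have "\<dots> = mink (lift x) (A *v w)"
    using C unfolding Oplus_def by blast
  finally show ?thesis .
qed

definition act_derivative :: "('n::finite) mmat \<Rightarrow> real^'n \<Rightarrow> real^'n \<Rightarrow> real^'n" where
  "act_derivative B x Y = (1 / act_factor B x) *\<^sub>R
     (vbar (B *v lift_vec Y) - (B *v lift_vec Y) $ None *\<^sub>R act B x)"

lemma has_derivative_matrix_lift:
  "((\<lambda>x. B *v lift x) has_derivative (\<lambda>Y. B *v lift_vec Y)) (at x within S)"
proof -
  have "bounded_linear (\<lambda>Y. B *v lift_vec Y)"
    by (rule bounded_linear_compose[OF matrix_vector_mul_bounded_linear bounded_linear_lift_vec])
  from has_derivative_add_const[OF bounded_linear_imp_has_derivative[OF this]]
  show ?thesis
    by (simp add: lift_eq_lift_vec matrix_vector_right_distrib)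
qed

lemma has_derivative_act_factor:
  "(act_factor B has_derivative (\<lambda>Y. (B *v lift_vec Y) $ None)) (at x within S)"
  using bounded_linear.has_derivative[OF bounded_linear_vec_nth has_derivative_matrix_lift] .

lemma has_derivative_act:
  assumes t: "act_factor B x \<noteq> 0"
  shows "(act B has_derivative act_derivative B x) (at x within S)"
proof -
  have "((\<lambda>x. inverse (act_factor B x) *\<^sub>R vbar (B *v lift x)) has_derivative
     (\<lambda>Y. inverse (act_factor B x) *\<^sub>R vbar (B *v lift_vec Y) +
        (- (inverse (act_factor B x) * (B *v lift_vec Y) $ None * inverse (act_factor B x)))
          *\<^sub>R vbar (B *v lift x))) (at x within S)"
    by (rule has_derivative_scaleR
        has_derivative_compose[OF has_derivative_act_factor has_derivative_inverse'[OF t]]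
        bounded_linear.has_derivative[OF bounded_linear_vbar has_derivative_matrix_lift])+
  moreover have "(\<lambda>x. inverse (act_factor B x) *\<^sub>R vbar (B *v lift x)) = act B"
    by (simp add: fun_eq_iff act_def divide_inverse)
  moreover have "(\<lambda>Y. inverse (act_factor B x) *\<^sub>R vbar (B *v lift_vec Y) +
        (- (inverse (act_factor B x) * (B *v lift_vec Y) $ None * inverse (act_factor B x)))
          *\<^sub>R vbar (B *v lift x)) = act_derivative B x"
    by (simp add: fun_eq_iff act_derivative_def act_def divide_inverse algebra_simps)
  ultimately show ?thesis
    by simp
qed

definition pullback :: "('n::finite) mmat \<Rightarrow> (real^'n \<Rightarrow> real) \<Rightarrow> real^'n \<Rightarrow> real" where
  "pullback B h x = act_factor B x * h (act B x)"

lemma fun_act_mink: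
  "fun_act A v h x = Lf x / Lf (act (matrix_inv A) x) * h (act (matrix_inv A) x) + mink (lift x) v"
  by (simp add: fun_act_def mink_lift)

lemma fun_act_eq_pullback:
  assumes "matrix_inv A \<in> Oplus" and "x \<in> ball 0 1"
  shows "fun_act A v h x = pullback (matrix_inv A) h x + mink (lift x) v"
  using Oplus_act[OF assms] Lf_pos[of "act (matrix_inv A) x"]
  by (simp add: fun_act_mink pullback_def)

lemma fun_act_cong:
  assumes "matrix_inv A \<in> Oplus" and "x \<in> ball 0 1" and "\<forall>y\<in>ball 0 1. g y = h y"
  shows "fun_act A v g x = fun_act A v h x"
  using Oplus_act(2)[OF assms(1,2)] assms(3) by (simp add: fun_act_def)

lemma fun_act_mult:
  assumes A: "invertible A" and B: "invertible B" and C: "matrix_inv A \<in> Oplus"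
    and x: "x \<in> ball 0 1"
  shows "fun_act (A ** B) (v + A *v w) h x = fun_act A v (fun_act B w h) x"
proof -
  define C D where "C = matrix_inv A" and "D = matrix_inv B"
  have Ct: "act_factor C x > 0" and Cx: "act C x \<in> ball 0 1"
    and LC: "Lf x = act_factor C x * Lf (act C x)"
    using Oplus_act[OF C x] by (simp_all add: C_def)
  have "act_factor C x * mink (lift (act C x)) w = mink (lift x) (A *v w)"
    using mink_lift_act[OF C matrix_inv_left[OF A]] Ct by (simp add: C_def)
  moreover have "act (matrix_inv (A ** B)) x = act D (act C x)"
    using matrix_inv_mult[OF A B] act_mult[of C x D] Ct by (simp add: C_def D_def)
  ultimately show ?thesis
    using LC Lf_pos[OF Cx]
    by (simp add: fun_act_mink mink_add_right C_def[symmetric] D_def[symmetric] field_simps)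
qed

lemma has_derivative_pullback:
  assumes B: "B \<in> Oplus" and x: "x \<in> ball 0 1"
    and G: "\<And>y. y \<in> ball 0 1 \<Longrightarrow> (h has_derivative (\<lambda>X. inner (G y) X)) (at y)"
  shows "(pullback B h has_derivative (\<lambda>X. (B *v lift_vec X) $ None * h (act B x)
           + act_factor B x * inner (G (act B x)) (act_derivative B x X))) (at x)"
proof -
  have "(act B has_derivative act_derivative B x) (at x)"
    using Oplus_act(1)[OF B x] by (simp add: has_derivative_act)
  from has_derivative_compose[OF this G[OF Oplus_act(2)[OF B x]]]
  have "((\<lambda>y. h (act B y)) has_derivative (\<lambda>X. inner (G (act B x)) (act_derivative B x X))) (at x)" .
  from has_derivative_mult[OF has_derivative_act_factor[of B] this]
  show ?thesis
    unfolding pullback_def[abs_def] by (rule has_derivative_eq_rhs) (simp add: fun_eq_iff)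
qed

lemma pullback_derivative_has_derivative_zero:
  assumes B: "B \<in> Oplus" and x: "x \<in> ball 0 1"
    and G: "\<And>y. y \<in> ball 0 1 \<Longrightarrow> (h has_derivative (\<lambda>X. inner (G y) X)) (at y)"
    and DG: "\<And>y. y \<in> ball 0 1 \<Longrightarrow> (G has_derivative DG y) (at y)"
    and hess: "\<And>y X Y. y \<in> ball 0 1 \<Longrightarrow> inner (DG y Y) X / Lf y =
      inner (DG (act B y) (act_derivative B y Y)) (act_derivative B y X) / Lf (act B y)"
  shows "((\<lambda>y. (B *v lift_vec X) $ None * h (act B y)
           + act_factor B y * inner (G (act B y)) (act_derivative B y X) - inner (G y) X)
         has_derivative (\<lambda>_. 0)) (at x)"
proof -
  define s Z where "s = (B *v lift_vec X) $ None" and "Z = vbar (B *v lift_vec X)"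
  let ?y = "act B x" and ?dy = "act_derivative B x"
  \<comment> \<open>Multiplied by \<open>\<lambda>\<close>, the derivative of the action is affine in the base point.\<close>
  have num: "act_factor B y * inner v (act_derivative B y X) = inner v (Z - s *\<^sub>R act B y)"
    if "y \<in> ball 0 1" for y v
    using Oplus_act(1)[OF B that] by (simp add: act_derivative_def s_def Z_def)
  have dy: "(act B has_derivative ?dy) (at x)"
    using Oplus_act(1)[OF B x] by (simp add: has_derivative_act)
  have hy: "((\<lambda>y. h (act B y)) has_derivative (\<lambda>Y. inner (G ?y) (?dy Y))) (at x)"
    using has_derivative_compose[OF dy G[OF Oplus_act(2)[OF B x]]] .
  have Gy: "((\<lambda>y. G (act B y)) has_derivative (\<lambda>Y. DG ?y (?dy Y))) (at x)"
    using has_derivative_compose[OF dy DG[OF Oplus_act(2)[OF B x]]] .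
  have "((\<lambda>y. s * h (act B y) + inner (G (act B y)) (Z - s *\<^sub>R act B y) - inner (G y) X)
      has_derivative (\<lambda>Y. s * inner (G ?y) (?dy Y) + (inner (G ?y) (0 - s *\<^sub>R ?dy Y)
        + inner (DG ?y (?dy Y)) (Z - s *\<^sub>R ?y)) - inner (DG x Y) X)) (at x)"
    by (intro has_derivative_diff has_derivative_add has_derivative_inner
        bounded_linear.has_derivative[OF bounded_linear_mult_right hy] Gy
        has_derivative_const bounded_linear.has_derivative[OF bounded_linear_scaleR_right dy]
        has_derivative_inner_left DG x)
  \<comment> \<open>Only the Hessian terms survive, and they cancel by invariance.\<close>
  moreover have "inner (DG ?y (?dy Y)) (Z - s *\<^sub>R ?y) = inner (DG x Y) X" for Y
  proof -
    have "inner (DG ?y (?dy Y)) (Z - s *\<^sub>R ?y) = act_factor B x * inner (DG ?y (?dy Y)) (?dy X)"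
      using num[OF x, of "DG ?y (?dy Y)"] by (simp add: inner_commute)
    also have "\<dots> = inner (DG x Y) X"
      using hess[OF x, of Y X] Oplus_act[OF B x] Lf_pos[OF Oplus_act(2)[OF B x]]
      by (simp add: field_simps)
    finally show ?thesis .
  qed
  ultimately have "((\<lambda>y. s * h (act B y) + inner (G (act B y)) (Z - s *\<^sub>R act B y) - inner (G y) X)
      has_derivative (\<lambda>_. 0)) (at x)"
    by (simp add: algebra_simps)
  then show ?thesis
    by (rule has_derivative_transform_within_open[OF _ open_ball x])
      (simp add: num s_def)
qed

lemma pullback_minus_affine:
  fixes B :: "('n::finite) mmat"
  assumes B: "B \<in> Oplus"
    and G: "\<And>y. y \<in> ball 0 1 \<Longrightarrow> (h has_derivative (\<lambda>X. inner (G y) X)) (at y)"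
    and DG: "\<And>y. y \<in> ball 0 1 \<Longrightarrow> (G has_derivative DG y) (at y)"
    and hess: "\<And>y X Y. y \<in> ball 0 1 \<Longrightarrow> inner (DG y Y) X / Lf y =
      inner (DG (act B y) (act_derivative B y Y)) (act_derivative B y X) / Lf (act B y)"
  shows "\<exists>a c. \<forall>x\<in>ball 0 1. pullback B h x - h x = inner a x + c"
proof (rule second_derivative_zero_imp_affine[OF convex_ball])
  fix x :: "real^'n" and X assume x: "x \<in> ball 0 1"
  show "((\<lambda>x. pullback B h x - h x) has_derivative (\<lambda>X. (B *v lift_vec X) $ None * h (act B x)
      + act_factor B x * inner (G (act B x)) (act_derivative B x X) - inner (G x) X))
      (at x within ball 0 1)"
    by (rule has_derivative_at_withinI[OF has_derivative_diff[OF has_derivative_pullback[OF B x G] G[OF x]]])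
  show "((\<lambda>x. (B *v lift_vec X) $ None * h (act B x)
      + act_factor B x * inner (G (act B x)) (act_derivative B x X) - inner (G x) X)
      has_derivative (\<lambda>_. 0)) (at x within ball 0 1)"
    by (rule has_derivative_at_withinI[OF pullback_derivative_has_derivative_zero[OF B x G DG hess]])
qed

lemma fun_act_fixed_exists:
  assumes C: "matrix_inv A \<in> Oplus"
    and G: "\<And>y. y \<in> ball 0 1 \<Longrightarrow> (h has_derivative (\<lambda>X. inner (G y) X)) (at y)"
    and DG: "\<And>y. y \<in> ball 0 1 \<Longrightarrow> (G has_derivative DG y) (at y)"
    and hess: "\<And>y X Y. y \<in> ball 0 1 \<Longrightarrow> inner (DG y Y) X / Lf y =
      inner (DG (act (matrix_inv A) y) (act_derivative (matrix_inv A) y Y))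
            (act_derivative (matrix_inv A) y X) / Lf (act (matrix_inv A) y)"
  shows "\<exists>v. \<forall>x\<in>ball 0 1. fun_act A v h x = h x"
proof -
  obtain a c where ac: "\<forall>x\<in>ball 0 1. pullback (matrix_inv A) h x - h x = inner a x + c"
    using pullback_minus_affine[OF C G DG hess] by blast
  obtain v where v: "\<forall>x. inner (- a) x + (- c) = mink (lift x) v"
    using affine_eq_mink_lift by blast
  have "fun_act A v h x = h x" if "x \<in> ball 0 1" for x
    using ac[rule_format, OF that] v[rule_format, of x] fun_act_eq_pullback[OF C that]
    by simp
  then show ?thesis
    by blast
qed

lemma C2_with_hessian_fun_act_fixed_exists:
  assumes h: "C2_with_hessian h (ball 0 1) Hs" and C: "matrix_inv A \<in> Oplus"
    and hess: "\<forall>x\<in>ball 0 1. \<forall>X Y. Hs x X Y / Lf x =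
      Hs (act (matrix_inv A) x) (frechet_derivative (act (matrix_inv A)) (at x) X)
         (frechet_derivative (act (matrix_inv A)) (at x) Y) / Lf (act (matrix_inv A) x)"
  shows "\<exists>v. \<forall>x\<in>ball 0 1. fun_act A v h x = h x"
proof -
  obtain G where G: "\<forall>x\<in>ball 0 1. (h has_derivative (\<lambda>X. inner (G x) X)) (at x)"
    and DG_ex: "\<forall>x\<in>ball 0 1. \<exists>DG. (G has_derivative DG) (at x) \<and> (\<forall>X Y. Hs x X Y = inner (DG X) Y)"
    using h unfolding C2_with_hessian_def by blast
  obtain DG where DG: "\<forall>x\<in>ball 0 1. (G has_derivative DG x) (at x)"
    and Hs: "\<forall>x\<in>ball 0 1. \<forall>X Y. Hs x X Y = inner (DG x X) Y"
    using bchoice[OF DG_ex] by blast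
  have "inner (DG y Y) X / Lf y =
      inner (DG (act (matrix_inv A) y) (act_derivative (matrix_inv A) y Y))
            (act_derivative (matrix_inv A) y X) / Lf (act (matrix_inv A) y)"
    if y: "y \<in> ball 0 1" for y X Y
  proof -
    have "frechet_derivative (act (matrix_inv A)) (at y) = act_derivative (matrix_inv A) y"
      using Oplus_act(1)[OF C y] by (simp add: has_derivative_act frechet_derivative_at[symmetric])
    then show ?thesis
      using hess y Hs Oplus_act(2)[OF C y] by simp
  qed
  with G DG show ?thesis
    by (intro fun_act_fixed_exists[OF C]) auto
qed

lemma fun_act_fixed_unique:
  fixes A :: "('n::finite) mmat"
  assumes "\<forall>x\<in>ball 0 1. fun_act A v h x = h x" and "\<forall>x\<in>ball 0 1. fun_act A w h x = h x"
  shows "v = w"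
proof (intro mink_lift_eq_on_ball_imp_eq ballI)
  fix x :: "real^'n" assume "x \<in> ball 0 1"
  with assms show "mink (lift x) v = mink (lift x) w"
    unfolding fun_act_mink by (metis add_left_cancel)
qed

lemma fun_act_fixed_cocycle:
  assumes mult: "\<forall>A\<in>\<Gamma>. \<forall>B\<in>\<Gamma>. A ** B \<in> \<Gamma>"
    and inv: "\<And>A. A \<in> \<Gamma> \<Longrightarrow> invertible A \<and> matrix_inv A \<in> Oplus"
    and fixed: "\<forall>A\<in>\<Gamma>. \<forall>x\<in>ball 0 1. fun_act A (\<tau> A) h x = h x"
  shows "cocycle \<Gamma> \<tau>"
  unfolding cocycle_def
proof (intro ballI)
  fix A B assume A: "A \<in> \<Gamma>" and B: "B \<in> \<Gamma>"
  have "fun_act (A ** B) (\<tau> A + A *v \<tau> B) h x = h x" if x: "x \<in> ball 0 1" for x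
  proof -
    have "fun_act (A ** B) (\<tau> A + A *v \<tau> B) h x = fun_act A (\<tau> A) (fun_act B (\<tau> B) h) x"
      using inv[OF A] inv[OF B] x by (simp add: fun_act_mult)
    also have "\<dots> = fun_act A (\<tau> A) h x"
      using inv[OF A] x fixed B by (simp add: fun_act_cong)
    also have "\<dots> = h x"
      using fixed A x by blast
    finally show ?thesis .
  qed
  then show "\<tau> (A ** B) = \<tau> A + A *v \<tau> B"
    using fixed mult A B fun_act_fixed_unique[of "A ** B"] by blast
qed

lemma
  assumes "admissible_group \<Gamma>"
  shows admissible_group_mult: "\<forall>A\<in>\<Gamma>. \<forall>B\<in>\<Gamma>. A ** B \<in> \<Gamma>"
    and admissible_group_matrix_inv: "\<And>A. A \<in> \<Gamma> \<Longrightarrow> matrix_inv A \<in> \<Gamma>"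
    and admissible_group_invertible: "\<And>A. A \<in> \<Gamma> \<Longrightarrow> invertible A \<and> matrix_inv A \<in> Oplus"
proof -
  have sub: "\<Gamma> \<subseteq> Oplus" and det: "\<forall>A\<in>\<Gamma>. det A > 0"
    and inv: "\<forall>A\<in>\<Gamma>. matrix_inv A \<in> \<Gamma>" and mult: "\<forall>A\<in>\<Gamma>. \<forall>B\<in>\<Gamma>. A ** B \<in> \<Gamma>"
    using assms unfolding admissible_group_def by simp_all
  then show "\<forall>A\<in>\<Gamma>. \<forall>B\<in>\<Gamma>. A ** B \<in> \<Gamma>" and "\<And>A. A \<in> \<Gamma> \<Longrightarrow> matrix_inv A \<in> \<Gamma>"
    by simp_all
  fix A assume "A \<in> \<Gamma>"
  with sub det inv show "invertible A \<and> matrix_inv A \<in> Oplus"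
    by (auto simp: invertible_det_nz)
qed

lemma C2_with_hessian_continuous_on: "C2_with_hessian h S Hs \<Longrightarrow> continuous_on S h"
  unfolding C2_with_hessian_def
  by (metis continuous_at_imp_continuous_on has_derivative_continuous)

theorem lemma3p9:
  fixes \<Gamma> :: "('n::finite) mmat set"
    and h :: "real^'n \<Rightarrow> real"
    and Hs :: "real^'n \<Rightarrow> real^'n \<Rightarrow> real^'n \<Rightarrow> real"
  assumes "CARD('n) \<ge> 2"
    and "admissible_group \<Gamma>"
    and "C2_with_hessian h (ball 0 1) Hs"
    and "\<forall>A\<in>\<Gamma>. \<forall>x\<in>ball 0 1. \<forall>X Y.
           Hs x X Y / Lf x =
           Hs (act A x) (frechet_derivative (act A) (at x) X)
                        (frechet_derivative (act A) (at x) Y) / Lf (act A x)"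
  shows "\<exists>\<tau>. cocycle \<Gamma> \<tau> \<and> equivariant \<Gamma> \<tau> h \<and>
           (\<forall>\<sigma>. cocycle \<Gamma> \<sigma> \<and> equivariant \<Gamma> \<sigma> h \<longrightarrow> (\<forall>A\<in>\<Gamma>. \<sigma> A = \<tau> A))"
proof -
  have "\<forall>A\<in>\<Gamma>. \<exists>v. \<forall>x\<in>ball 0 1. fun_act A v h x = h x"
  proof (rule ballI, rule C2_with_hessian_fun_act_fixed_exists[OF assms(3)])
    fix A assume A: "A \<in> \<Gamma>"
    show "matrix_inv A \<in> Oplus"
      using admissible_group_invertible[OF assms(2) A] by blast
    show "\<forall>x\<in>ball 0 1. \<forall>X Y. Hs x X Y / Lf x =
      Hs (act (matrix_inv A) x) (frechet_derivative (act (matrix_inv A)) (at x) X)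
         (frechet_derivative (act (matrix_inv A)) (at x) Y) / Lf (act (matrix_inv A) x)"
      using assms(4) admissible_group_matrix_inv[OF assms(2) A] by (rule bspec)
  qed
  from bchoice[OF this] obtain \<tau>
    where \<tau>: "\<forall>A\<in>\<Gamma>. \<forall>x\<in>ball 0 1. fun_act A (\<tau> A) h x = h x"
    by blast
  have "cocycle \<Gamma> \<tau>"
    by (rule fun_act_fixed_cocycle[OF admissible_group_mult[OF assms(2)]
          admissible_group_invertible[OF assms(2)] \<tau>])
  moreover have "equivariant \<Gamma> \<tau> h"
    using \<tau> C2_with_hessian_continuous_on[OF assms(3)] unfolding equivariant_def by blast
  moreover have "\<sigma> A = \<tau> A" if "equivariant \<Gamma> \<sigma> h" and "A \<in> \<Gamma>" for \<sigma> A
    using that \<tau> fun_act_fixed_unique[of A "\<sigma> A" h "\<tau> A"] unfolding equivariant_def by blast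
  ultimately show ?thesis
    by blast
qed

end
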